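(* Fix $k\ge1$, times $0=t_0<t_1<\cdots<t_k$, withdrawal amounts $w_1,\dots,w_k>0$, constants $a_1,\dots,a_{k-1}>0$, and an initial investment $P>0$. Let $W_k$ be the amount remaining after the $k$-th withdrawal and $Z_0^*$ the lower bound variable, both as defined in the context. Then $$\mathbb P(W_k\ge0)\le\mathbb P(Z_0^*\le P).$$ (Here $W_k\ge0$ is exactly the event that the withdrawals $w_1,\dots,w_k$ at times $t_1,\dots,t_k$ can all be made.)
   Context: Wealth process: on a probability space $(\Omega,\mathcal F,\mathbb P)$, $X:[0,\infty)\times\Omega\to(0,\infty)$ is a process such that $\log X$ is a Lévy process (càdlàg paths, independent increments) with, for all $0\le s<t$, $\log\frac{X(t)}{X(s)}$ a Lévy alpha-stable random variable with shape $\alpha\in(0,2]$, skewness $\beta\in[-1,1]$, scale $\sigma(t-s)^{1/\alpha}$ ($\sigma>0$) and location $\mu(t-s)$ ($\mu\in\mathbb R$). Set $X_j=X(t_j)/X(t_{j-1})$ for $j\ge1$. Withdrawals: $W_1=PX_1-w_1$ and $W_j=W_{j-1}X_j-w_j$ for $j=2,\dots,k$. Required initial investment: $W_{k-1}^*=w_kX_k^{-1}$ and $W_{j-1}^*=X_j^{-1}(W_j^*+w_j)$ for $j=k-1,\dots,1$. Lower bound: with $b_j=\frac{a_j}{a_j+w_j}$, set $Z_{k-1}^*=W_{k-1}^*$ and $Z_{j-1}^*=X_j^{-1}(a_j+w_j)\left(\frac{Z_j^*}{a_j}\right)^{b_j}$ for $j=k-1,\dots,1$. *)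

theory Defs
  imports "HOL-Probability.Probability"
begin

(* Characteristic function of the Levy alpha-stable law with shape alpha, skewness beta,
   scale gam and location delta (standard S1 parametrisation, Nolan / Samorodnitsky-Taqqu). *)
definition stable_cf :: "real \<Rightarrow> real \<Rightarrow> real \<Rightarrow> real \<Rightarrow> real \<Rightarrow> complex" where
  "stable_cf alpha beta gam delta u =
     (if alpha = 1 then
        exp (\<i> * complex_of_real (u * delta)
             - complex_of_real (gam * \<bar>u\<bar>)
               * (1 + \<i> * complex_of_real (beta * (2 / pi) * sgn u * ln \<bar>u\<bar>)))
      else
        exp (\<i> * complex_of_real (u * delta)
             - complex_of_real ((gam * \<bar>u\<bar>) powr alpha)
               * (1 - \<i> * complex_of_real (beta * sgn u * tan (pi * alpha / 2)))))"

definition is_stable :: "'a measure \<Rightarrow> ('a \<Rightarrow> real) \<Rightarrow> real \<Rightarrow> real \<Rightarrow> real \<Rightarrow> real \<Rightarrow> bool" where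
  "is_stable M Y alpha beta gam delta \<longleftrightarrow>
     Y \<in> borel_measurable M \<and>
     (\<forall>u. char (distr M borel Y) u = stable_cf alpha beta gam delta u)"

(* wealth after the j-th withdrawal, given the realised growth factors x j = X_j;
   W_0 = P, W_1 = P X_1 - w_1, W_j = W_{j-1} X_j - w_j *)
fun Wealth :: "real \<Rightarrow> (nat \<Rightarrow> real) \<Rightarrow> (nat \<Rightarrow> real) \<Rightarrow> nat \<Rightarrow> real" where
  "Wealth P w x 0 = P"
| "Wealth P w x (Suc j) = Wealth P w x j * x (Suc j) - w (Suc j)"

(* required investment W_j^* (j < k):  W_{k-1}^* = w_k / X_k,
   W_{j-1}^* = (W_j^* + w_j) / X_j;  we set W_j^* = 0 for j >= k, so that the
   recursion also yields W_{k-1}^* = (0 + w_k)/X_k *)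
function Wstar :: "nat \<Rightarrow> (nat \<Rightarrow> real) \<Rightarrow> (nat \<Rightarrow> real) \<Rightarrow> nat \<Rightarrow> real" where
  "Wstar k w x j = (if k \<le> j then 0 else (Wstar k w x (Suc j) + w (Suc j)) / x (Suc j))"
  by auto
termination by (relation "Wellfounded.measure (\<lambda>(k, w, x, j). k - j)") auto

function Zstar :: "nat \<Rightarrow> (nat \<Rightarrow> real) \<Rightarrow> (nat \<Rightarrow> real) \<Rightarrow> (nat \<Rightarrow> real) \<Rightarrow> nat \<Rightarrow> real" where
  "Zstar k a w x j =
     (if k \<le> Suc j then Wstar k w x j
      else (a (Suc j) + w (Suc j)) / x (Suc j)
           * (Zstar k a w x (Suc j) / a (Suc j)) powr (a (Suc j) / (a (Suc j) + w (Suc j))))"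
  by auto
termination by (relation "Wellfounded.measure (\<lambda>(k, a, w, x, j). k - j)") auto

end

theory Submission
  imports Defs
begin

text \<open>The inequality holds pathwise. Along every path, \<open>W\<^sub>j - W\<^sup>*\<^sub>j\<close> equals
  \<open>(P - W\<^sup>*\<^sub>0) X\<^sub>1\<cdots>X\<^sub>j\<close>, so the withdrawals can all be made exactly when
  \<open>W\<^sup>*\<^sub>0 \<le> P\<close>. Weighted AM-GM, \<open>y\<^sup>b \<le> b y + (1 - b)\<close>, turns the recursion for
  \<open>Z\<^sup>*\<close> into a minorant of the recursion for \<open>W\<^sup>*\<close>, hence \<open>Z\<^sup>*\<^sub>0 \<le> W\<^sup>*\<^sub>0\<close>.\<close>

declare Wstar.simps[simp del] Zstar.simps[simp del]

lemma powr_le_convex_comb_one: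
  fixes y b :: real
  assumes "0 \<le> y" "0 < b" "b \<le> 1"
  shows "y powr b \<le> b * y + (1 - b)"
  using Youngs_inequality_0[of b "1 - b" y 1] assms by (cases "y = 0") simp_all

lemma powr_weighted_le_add:
  fixes A W Z :: real
  assumes A: "0 < A" and W: "0 < W" and Z: "0 \<le> Z"
  shows "(A + W) * (Z / A) powr (A / (A + W)) \<le> Z + W"
proof -
  define b where "b = A / (A + W)"
  have b: "0 < b" "b \<le> 1" using A W by (auto simp: b_def)
  have "(A + W) * (Z / A) powr b \<le> (A + W) * (b * (Z / A) + (1 - b))"
    using powr_le_convex_comb_one[of "Z / A" b] A W Z b by (intro mult_left_mono) auto
  also have "\<dots> = (A + W) * b * (Z / A) + (A + W) * (1 - b)"
    by (simp only: distrib_left mult.assoc)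
  also have "(A + W) * b = A"
    using A W by (simp add: b_def)
  also have "(A + W) * (1 - b) = W"
    using A W by (simp add: b_def field_simps)
  also have "A * (Z / A) = Z"
    using A by simp
  finally show ?thesis by (simp add: b_def add.commute)
qed

lemma Wealth_minus_Wstar:
  assumes xpos: "\<And>i. 1 \<le> i \<Longrightarrow> i \<le> k \<Longrightarrow> x i > 0" and "j \<le> k"
  shows "Wealth P w x j - Wstar k w x j = (P - Wstar k w x 0) * (\<Prod>i\<in>{1..j}. x i)"
  using \<open>j \<le> k\<close>
proof (induction j)
  case 0
  then show ?case by simp
next
  case (Suc j)
  have "Wstar k w x j * x (Suc j) = Wstar k w x (Suc j) + w (Suc j)"
    using Suc.prems xpos[of "Suc j"] by (simp add: Wstar.simps[of k w x j])
  then have "Wealth P w x (Suc j) - Wstar k w x (Suc j)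
             = (Wealth P w x j - Wstar k w x j) * x (Suc j)"
    by (simp add: algebra_simps)
  with Suc show ?case by (simp add: prod.nat_ivl_Suc')
qed

lemma Wealth_nonneg_imp_Wstar_le:
  assumes xpos: "\<And>i. 1 \<le> i \<Longrightarrow> i \<le> k \<Longrightarrow> x i > 0" and "Wealth P w x k \<ge> 0"
  shows "Wstar k w x 0 \<le> P"
proof -
  have "Wealth P w x k = (P - Wstar k w x 0) * (\<Prod>i\<in>{1..k}. x i)"
    using Wealth_minus_Wstar[where x = x and k = k and P = P and w = w and j = k, OF xpos] by (simp add: Wstar.simps[of k w x k])
  moreover have "(\<Prod>i\<in>{1..k}. x i) > 0"
    using xpos by (intro prod_pos) auto
  ultimately show ?thesis
    using \<open>Wealth P w x k \<ge> 0\<close> by (simp add: zero_le_mult_iff)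
qed

lemma Wstar_nonneg:
  assumes xpos: "\<And>i. 1 \<le> i \<Longrightarrow> i \<le> k \<Longrightarrow> x i > 0"
    and wpos: "\<And>i. 1 \<le> i \<Longrightarrow> i \<le> k \<Longrightarrow> w i > 0"
  shows "Wstar k w x j \<ge> 0"
proof (induction "k - j" arbitrary: j)
  case 0
  then show ?case by (simp add: Wstar.simps[of k w x j])
next
  case (Suc n)
  then have "j < k" "Wstar k w x (Suc j) \<ge> 0" by simp_all
  with xpos[of "Suc j"] wpos[of "Suc j"] show ?case
    by (simp add: Wstar.simps[of k w x j])
qed

lemma Zstar_nonneg:
  assumes xpos: "\<And>i. 1 \<le> i \<Longrightarrow> i \<le> k \<Longrightarrow> x i > 0"
    and wpos: "\<And>i. 1 \<le> i \<Longrightarrow> i \<le> k \<Longrightarrow> w i > 0"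
    and apos: "\<And>i. 1 \<le> i \<Longrightarrow> i \<le> k - 1 \<Longrightarrow> a i > 0"
  shows "Zstar k a w x j \<ge> 0"
proof (cases "k \<le> Suc j")
  case True
  then show ?thesis
    using Wstar_nonneg[OF xpos wpos] by (simp add: Zstar.simps[of k a w x j])
next
  case False
  then have "x (Suc j) > 0" "w (Suc j) > 0" "a (Suc j) > 0"
    using xpos wpos apos by auto
  then show ?thesis
    using False by (simp add: Zstar.simps[of k a w x j])
qed

lemma Zstar_le_Wstar:
  assumes xpos: "\<And>i. 1 \<le> i \<Longrightarrow> i \<le> k \<Longrightarrow> x i > 0"
    and wpos: "\<And>i. 1 \<le> i \<Longrightarrow> i \<le> k \<Longrightarrow> w i > 0"
    and apos: "\<And>i. 1 \<le> i \<Longrightarrow> i \<le> k - 1 \<Longrightarrow> a i > 0"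
  shows "Zstar k a w x j \<le> Wstar k w x j"
proof (induction "k - j" arbitrary: j)
  case 0
  then show ?case by (simp add: Zstar.simps[of k a w x j])
next
  case (Suc n)
  show ?case
  proof (cases "k \<le> Suc j")
    case True
    then show ?thesis by (simp add: Zstar.simps[of k a w x j])
  next
    case False
    define A W Z where "A = a (Suc j)" and "W = w (Suc j)" and "Z = Zstar k a w x (Suc j)"
    have A: "A > 0" and W: "W > 0" and x: "x (Suc j) > 0"
      using False apos[of "Suc j"] wpos[of "Suc j"] xpos[of "Suc j"] by (auto simp: A_def W_def)
    have "(A + W) * (Z / A) powr (A / (A + W)) \<le> Z + W"
      using powr_weighted_le_add[OF A W] Zstar_nonneg[OF xpos wpos apos] by (simp add: Z_def)
    also have "\<dots> \<le> Wstar k w x (Suc j) + W"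
      using Suc by (simp add: Z_def)
    finally show ?thesis
      using False x
      by (simp add: Zstar.simps[of k a w x j] Wstar.simps[of k w x j] A_def W_def Z_def
          divide_right_mono)
  qed
qed

lemma borel_measurable_Wstar:
  assumes "\<And>i. 1 \<le> i \<Longrightarrow> i \<le> k \<Longrightarrow> (\<lambda>\<omega>. x \<omega> i) \<in> borel_measurable M"
  shows "(\<lambda>\<omega>. Wstar k w (x \<omega>) j) \<in> borel_measurable M"
proof (induction "k - j" arbitrary: j)
  case 0
  then show ?case by (simp add: Wstar.simps[of k w _ j])
next
  case (Suc n)
  then have "j < k" "(\<lambda>\<omega>. Wstar k w (x \<omega>) (Suc j)) \<in> borel_measurable M" by simp_all
  with assms[of "Suc j"] show ?case by (simp add: Wstar.simps[of k w _ j])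
qed

lemma borel_measurable_Zstar:
  assumes "\<And>i. 1 \<le> i \<Longrightarrow> i \<le> k \<Longrightarrow> (\<lambda>\<omega>. x \<omega> i) \<in> borel_measurable M"
  shows "(\<lambda>\<omega>. Zstar k a w (x \<omega>) j) \<in> borel_measurable M"
proof (induction "k - j" arbitrary: j)
  case 0
  then show ?case using borel_measurable_Wstar[OF assms] by (simp add: Zstar.simps[of k a w _ j])
next
  case (Suc n)
  show ?case
  proof (cases "k \<le> Suc j")
    case True
    then show ?thesis using borel_measurable_Wstar[OF assms] by (simp add: Zstar.simps[of k a w _ j])
  next
    case False
    with Suc assms[of "Suc j"] show ?thesis by (simp add: Zstar.simps[of k a w _ j])
  qed
qed

theorem theorem6:
  fixes M :: "'a measure" and X :: "real \<Rightarrow> 'a \<Rightarrow> real"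
    and alpha beta sigma mu P :: real and k :: nat
    and t w a :: "nat \<Rightarrow> real"
  assumes ps: "prob_space M"
    and pos: "\<And>s \<omega>. s \<ge> 0 \<Longrightarrow> \<omega> \<in> space M \<Longrightarrow> X s \<omega> > 0"
    and meas: "\<And>s. s \<ge> 0 \<Longrightarrow> X s \<in> borel_measurable M"
    and start: "AE \<omega> in M. X 0 \<omega> = 1"
    and cadlag: "\<And>\<omega> s. \<omega> \<in> space M \<Longrightarrow> s \<ge> 0 \<Longrightarrow>
                   continuous (at_right s) (\<lambda>r. ln (X r \<omega>)) \<and>
                   (s > 0 \<longrightarrow> (\<exists>L. ((\<lambda>r. ln (X r \<omega>)) \<longlongrightarrow> L) (at_left s)))"
    and indep_incr: "\<And>n (s :: nat \<Rightarrow> real). 0 \<le> s 0 \<Longrightarrow> (\<And>i. i < n \<Longrightarrow> s i < s (Suc i)) \<Longrightarrow>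
                   prob_space.indep_vars M (\<lambda>_. borel)
                     (\<lambda>i \<omega>. ln (X (s (Suc i)) \<omega>) - ln (X (s i) \<omega>)) {..<n}"
    and alpha: "0 < alpha" "alpha \<le> 2"
    and beta: "-1 \<le> beta" "beta \<le> 1"
    and sigma: "sigma > 0"
    and stable: "\<And>s r. 0 \<le> s \<Longrightarrow> s < r \<Longrightarrow>
                   is_stable M (\<lambda>\<omega>. ln (X r \<omega> / X s \<omega>)) alpha beta
                     (sigma * (r - s) powr (1 / alpha)) (mu * (r - s))"
    and k: "k \<ge> 1"
    and t0: "t 0 = 0"
    and tmono: "\<And>j. j < k \<Longrightarrow> t j < t (Suc j)"
    and wpos: "\<And>j. 1 \<le> j \<Longrightarrow> j \<le> k \<Longrightarrow> w j > 0"
    and apos: "\<And>j. 1 \<le> j \<Longrightarrow> j \<le> k - 1 \<Longrightarrow> a j > 0"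
    and P: "P > 0"
  shows "measure M {\<omega> \<in> space M. Wealth P w (\<lambda>j. X (t j) \<omega> / X (t (j - 1)) \<omega>) k \<ge> 0}
         \<le> measure M {\<omega> \<in> space M. Zstar k a w (\<lambda>j. X (t j) \<omega> / X (t (j - 1)) \<omega>) 0 \<le> P}"
proof -
  interpret prob_space M by (rule ps)
  define x where "x = (\<lambda>\<omega> j. X (t j) \<omega> / X (t (j - 1)) \<omega>)"
  have t_nonneg: "j \<le> k \<Longrightarrow> t j \<ge> 0" for j
  proof (induction j)
    case (Suc j)
    then show ?case using tmono[of j] by simp
  qed (simp add: t0)
  have xpos: "x \<omega> i > 0" if "\<omega> \<in> space M" "1 \<le> i" "i \<le> k" for \<omega> i
    using pos[OF t_nonneg[of i] that(1)] pos[OF t_nonneg[of "i - 1"] that(1)] that by (simp add: x_def)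
  have x_meas: "(\<lambda>\<omega>. x \<omega> i) \<in> borel_measurable M" if "1 \<le> i" "i \<le> k" for i
    using meas[OF t_nonneg[of i]] meas[OF t_nonneg[of "i - 1"]] that by (simp add: x_def)
  have "{\<omega> \<in> space M. Wealth P w (x \<omega>) k \<ge> 0} \<subseteq> {\<omega> \<in> space M. Zstar k a w (x \<omega>) 0 \<le> P}"
  proof safe
    fix \<omega> assume \<omega>: "\<omega> \<in> space M" "Wealth P w (x \<omega>) k \<ge> 0"
    have "Zstar k a w (x \<omega>) 0 \<le> Wstar k w (x \<omega>) 0"
      using Zstar_le_Wstar[OF xpos[OF \<omega>(1)] wpos apos] by simp
    also have "\<dots> \<le> P"
      using Wealth_nonneg_imp_Wstar_le[OF xpos[OF \<omega>(1)] \<omega>(2)] .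
    finally show "Zstar k a w (x \<omega>) 0 \<le> P" .
  qed
  moreover have "{\<omega> \<in> space M. Zstar k a w (x \<omega>) 0 \<le> P} \<in> sets M"
    using borel_measurable_Zstar[of k x M a w 0] x_meas by measurable
  ultimately show ?thesis
    unfolding x_def by (rule finite_measure_mono)
qed

end
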